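(* Let $M$ be a matroid such that the basis pair graph of each minor of $M$ is connected. Let $k\geq 2$ and let $S$ be a multiset of size $k\,r(M)$ whose elements lie in $E(M)$. If $G_M(S)$ is connected, then $G'_M(S)$ is connected.
   Context: For a matroid $N$, the basis pair graph $G(N)$ has as vertices the ordered triples $(A_1,A_2,A_3)$ of subsets of $E(N)$ with $A_1,A_2$ disjoint bases of $N$ and $A_3=E(N)-(A_1\cup A_2)$; two vertices $(A_1,A_2,A_3)$, $(B_1,B_2,B_3)$ are adjacent if $|A_1-B_1|+|A_2-B_2|+|A_3-B_3|=2$. The graph $G_M(S)$ has as vertices all multisets of $k$ bases of $M$ whose multiset union is $S$, two vertices being adjacent if one is obtained from the other by a symmetric exchange between two of its bases: replacing bases $B_i,B_j$ by $(B_i-b_i)\cup\{b_j\}$ and $(B_j-b_j)\cup\{b_i\}$ for some $b_i\in B_i-B_j$, $b_j\in B_j-B_i$. The graph $G'_M(S)$ is defined the same way but with ordered $k$-tuples $(B_1,\dots,B_k)$ of bases of $M$ (with multiset union $S$) as vertices: $(A_1,\dots,A_k)$ and $(B_1,\dots,B_k)$ are adjacent if for some $1\le i<j\le k$ and some $b_i\in B_i-B_j$, $b_j\in B_j-B_i$, the tuple $(A_1,\dots,A_k)$ is obtained from $(B_1,\dots,B_k)$ by replacing $B_i$ by $(B_i-b_i)\cup\{b_j\}$ and $B_j$ by $(B_j-b_j)\cup\{b_i\}$ (other coordinates unchanged). Empty graphs are regarded as connected. *)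

theory Defs
  imports Main "HOL-Library.Multiset"
begin

definition matroid :: "'a set \<Rightarrow> 'a set set \<Rightarrow> bool" where
  "matroid E \<I> \<longleftrightarrow> finite E \<and> (\<forall>X\<in>\<I>. X \<subseteq> E) \<and> {} \<in> \<I>
     \<and> (\<forall>X Y. Y \<in> \<I> \<and> X \<subseteq> Y \<longrightarrow> X \<in> \<I>)
     \<and> (\<forall>X Y. X \<in> \<I> \<and> Y \<in> \<I> \<and> card X < card Y \<longrightarrow> (\<exists>y\<in>Y - X. insert y X \<in> \<I>))"

definition mrank :: "'a set set \<Rightarrow> 'a set \<Rightarrow> nat" where
  "mrank \<I> X = Max {card Y | Y. Y \<subseteq> X \<and> Y \<in> \<I>}"

definition bases :: "'a set \<Rightarrow> 'a set set \<Rightarrow> 'a set set" where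
  "bases E \<I> = {B. B \<subseteq> E \<and> B \<in> \<I> \<and> (\<forall>X. X \<in> \<I> \<and> B \<subseteq> X \<longrightarrow> X = B)}"

text \<open>The minor M/C\D (C, D disjoint subsets of E): ground set and independent sets.\<close>
definition minor_ground :: "'a set \<Rightarrow> 'a set \<Rightarrow> 'a set \<Rightarrow> 'a set" where
  "minor_ground E C D = E - C - D"

definition minor_indep :: "'a set \<Rightarrow> 'a set set \<Rightarrow> 'a set \<Rightarrow> 'a set \<Rightarrow> 'a set set" where
  "minor_indep E \<I> C D = {X. X \<subseteq> E - C - D \<and> mrank \<I> (X \<union> C) = card X + mrank \<I> C}"

text \<open>Connectedness of a graph with vertex set V and adjacency relation adj
  (empty graph is connected).\<close>
definition graph_connected :: "'v set \<Rightarrow> ('v \<Rightarrow> 'v \<Rightarrow> bool) \<Rightarrow> bool" where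
  "graph_connected V adj \<longleftrightarrow>
     (\<forall>x\<in>V. \<forall>y\<in>V. (\<lambda>a b. a \<in> V \<and> b \<in> V \<and> adj a b)\<^sup>*\<^sup>* x y)"

definition bpg_vertices :: "'a set \<Rightarrow> 'a set set \<Rightarrow> ('a set \<times> 'a set \<times> 'a set) set" where
  "bpg_vertices E \<I> = {(A1, A2, A3). A1 \<in> bases E \<I> \<and> A2 \<in> bases E \<I> \<and> A1 \<inter> A2 = {}
      \<and> A3 = E - (A1 \<union> A2)}"

definition bpg_adj :: "('a set \<times> 'a set \<times> 'a set) \<Rightarrow> ('a set \<times> 'a set \<times> 'a set) \<Rightarrow> bool" where
  "bpg_adj A B \<longleftrightarrow> (case A of (A1, A2, A3) \<Rightarrow> case B of (B1, B2, B3) \<Rightarrow>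
      card (A1 - B1) + card (A2 - B2) + card (A3 - B3) = 2)"

definition basis_pair_graph_connected :: "'a set \<Rightarrow> 'a set set \<Rightarrow> bool" where
  "basis_pair_graph_connected E \<I> \<longleftrightarrow> graph_connected (bpg_vertices E \<I>) bpg_adj"

definition GM_vertices :: "'a set \<Rightarrow> 'a set set \<Rightarrow> nat \<Rightarrow> 'a multiset \<Rightarrow> 'a set multiset set" where
  "GM_vertices E \<I> k S = {X. size X = k \<and> (\<forall>B\<in>#X. B \<in> bases E \<I>)
      \<and> sum_mset (image_mset mset_set X) = S}"

definition GM_exch :: "'a set multiset \<Rightarrow> 'a set multiset \<Rightarrow> bool" where
  "GM_exch X Y \<longleftrightarrow> (\<exists>Bi Bj bi bj. {#Bi, Bj#} \<subseteq># X \<and> bi \<in> Bi - Bj \<and> bj \<in> Bj - Bi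
      \<and> Y = X - {#Bi, Bj#} + {#insert bj (Bi - {bi}), insert bi (Bj - {bj})#})"

definition GM_adj :: "'a set multiset \<Rightarrow> 'a set multiset \<Rightarrow> bool" where
  "GM_adj X Y \<longleftrightarrow> GM_exch X Y \<or> GM_exch Y X"

definition GM'_vertices :: "'a set \<Rightarrow> 'a set set \<Rightarrow> nat \<Rightarrow> 'a multiset \<Rightarrow> 'a set list set" where
  "GM'_vertices E \<I> k S = {L. length L = k \<and> (\<forall>B\<in>set L. B \<in> bases E \<I>)
      \<and> sum_list (map mset_set L) = S}"

definition GM'_exch :: "'a set list \<Rightarrow> 'a set list \<Rightarrow> bool" where
  "GM'_exch L L' \<longleftrightarrow> (\<exists>i j bi bj. i < j \<and> j < length L \<and> bi \<in> L ! i - L ! j \<and> bj \<in> L ! j - L ! i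
      \<and> L' = L[i := insert bj (L ! i - {bi}), j := insert bi (L ! j - {bj})])"

definition GM'_adj :: "'a set list \<Rightarrow> 'a set list \<Rightarrow> bool" where
  "GM'_adj X Y \<longleftrightarrow> GM'_exch X Y \<or> GM'_exch Y X"

end

theory Submission
  imports Defs
begin

text \<open>
  A path in \<open>G\<^sub>M(S)\<close> lifts to \<open>G'\<^sub>M(S)\<close>: a symmetric exchange between two
  bases of a multiset can be carried out on any ordering of it. The lifted path ends at
  some reordering of the target tuple, and reorderings are generated by transpositions,
  so it remains to swap two coordinates \<open>P\<close> and \<open>Q\<close> of a tuple. In the minor on
  \<open>P \<Delta> Q\<close> obtained by contracting \<open>P \<inter> Q\<close> and deleting \<open>E - (P \<union> Q)\<close>, the pairs
  of disjoint bases \<open>(A\<^sub>1, A\<^sub>2)\<close> are exactly the pairs for which \<open>A\<^sub>1 \<union> (P \<inter> Q)\<close>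
  and \<open>A\<^sub>2 \<union> (P \<inter> Q)\<close> are bases of \<open>M\<close>; these have the same multiset union as
  \<open>P\<close> and \<open>Q\<close>, and adjacency in the basis pair graph is a symmetric exchange between
  them. A path from \<open>(P - Q, Q - P)\<close> to \<open>(Q - P, P - Q)\<close> in the connected basis pair
  graph of the minor is therefore a path in \<open>G'\<^sub>M(S)\<close> swapping the two coordinates.
\<close>

section \<open>Reachability in graphs\<close>

abbreviation reachable :: "'v set \<Rightarrow> ('v \<Rightarrow> 'v \<Rightarrow> bool) \<Rightarrow> 'v \<Rightarrow> 'v \<Rightarrow> bool" where
  "reachable V adj \<equiv> (\<lambda>a b. a \<in> V \<and> b \<in> V \<and> adj a b)\<^sup>*\<^sup>*"

lemma equivp_reachable:
  assumes "symp adj"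
  shows "equivp (reachable V adj)"
proof (rule equivpI)
  show "reflp (reachable V adj)" by (simp add: reflpI)
  show "transp (reachable V adj)" by (simp add: transpI)
  have "symp (\<lambda>a b. a \<in> V \<and> b \<in> V \<and> adj a b)"
    using assms by (auto simp: symp_def)
  then show "symp (reachable V adj)" by (rule symp_rtranclp)
qed

lemma reachable_hom:
  assumes "reachable V adj x y" "x \<in> V"
    and "\<And>v. v \<in> V \<Longrightarrow> f v \<in> W"
    and "\<And>v w. v \<in> V \<Longrightarrow> w \<in> V \<Longrightarrow> adj v w \<Longrightarrow> adj' (f v) (f w)"
  shows "reachable W adj' (f x) (f y)"
  using assms(1)
proof (induction rule: rtranclp_induct)
  case (step y z)
  then show ?case using assms(3,4) by (simp add: rtranclp.rtrancl_into_rtrancl)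
qed simp

section \<open>Bases of a matroid and of its minors\<close>

lemma finite_card_indep_subsets:
  assumes "finite X"
  shows "finite {card Y |Y. Y \<subseteq> X \<and> Y \<in> I}"
proof -
  have "{card Y |Y. Y \<subseteq> X \<and> Y \<in> I} \<subseteq> card ` Pow X" by blast
  then show ?thesis using assms finite_subset by blast
qed

context
  fixes E :: "'a set" and I :: "'a set set"
  assumes M: "matroid E I"
begin

lemma finite_ground: "finite E"
  using M by (simp add: matroid_def)

lemma indep_subset_ground: "X \<in> I \<Longrightarrow> X \<subseteq> E"
  using M by (simp add: matroid_def)

lemma indep_finite: "X \<in> I \<Longrightarrow> finite X"
  using finite_ground indep_subset_ground finite_subset by blast

lemma empty_indep: "{} \<in> I"
  using M by (simp add: matroid_def)

lemma indep_subset: "Y \<in> I \<Longrightarrow> X \<subseteq> Y \<Longrightarrow> X \<in> I"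
  using M unfolding matroid_def by blast

lemma indep_augment:
  "X \<in> I \<Longrightarrow> Y \<in> I \<Longrightarrow> card X < card Y \<Longrightarrow> \<exists>y\<in>Y - X. insert y X \<in> I"
  using M unfolding matroid_def by blast

lemma card_indep_le_basis:
  assumes "B \<in> bases E I" "X \<in> I"
  shows "card X \<le> card B"
proof (rule ccontr)
  assume "\<not> card X \<le> card B"
  then obtain y where "y \<in> X - B" "insert y B \<in> I"
    using indep_augment assms unfolding bases_def by force
  then show False using assms(1) unfolding bases_def by blast
qed

lemma basis_if_card_ge:
  assumes "B \<in> bases E I" "X \<in> I" "card B \<le> card X"
  shows "X \<in> bases E I"
  unfolding bases_def
proof (intro CollectI conjI allI impI)
  show "X \<subseteq> E" "X \<in> I" using assms(2) indep_subset_ground by auto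
  fix Y assume Y: "Y \<in> I \<and> X \<subseteq> Y"
  then have "card Y \<le> card X"
    using card_indep_le_basis[OF assms(1)] assms(3) by (meson le_trans)
  moreover have "finite Y" "card X \<le> card Y"
    using Y indep_finite card_mono by blast+
  ultimately show "Y = X"
    using card_subset_eq[of Y X] Y by simp
qed

lemma card_bases_eq:
  assumes "B \<in> bases E I" "B' \<in> bases E I"
  shows "card B = card B'"
proof -
  have "B \<in> I" "B' \<in> I" using assms unfolding bases_def by auto
  then show ?thesis using card_indep_le_basis assms by (meson le_antisym)
qed

lemma mrank_indep:
  assumes "X \<in> I"
  shows "mrank I X = card X"
  unfolding mrank_def
proof (rule Max_eqI)
  have "finite X" using indep_finite[OF assms] .
  then show "finite {card Y |Y. Y \<subseteq> X \<and> Y \<in> I}" by (rule finite_card_indep_subsets)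
  show "y \<le> card X" if "y \<in> {card Y |Y. Y \<subseteq> X \<and> Y \<in> I}" for y
    using that \<open>finite X\<close> card_mono by blast
  show "card X \<in> {card Y |Y. Y \<subseteq> X \<and> Y \<in> I}"
    using assms by blast
qed

lemma mrank_attained:
  assumes "finite X"
  obtains Y where "Y \<subseteq> X" "Y \<in> I" "card Y = mrank I X"
proof -
  have "card {} \<in> {card Y |Y. Y \<subseteq> X \<and> Y \<in> I}"
    using empty_indep by (intro CollectI exI[of _ "{}"]) simp
  then have "mrank I X \<in> {card Y |Y. Y \<subseteq> X \<and> Y \<in> I}"
    unfolding mrank_def using finite_card_indep_subsets[OF assms] by (intro Max_in) auto
  then obtain Y where "Y \<subseteq> X" "Y \<in> I" "mrank I X = card Y" by blast
  then show ?thesis using that by simp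
qed

lemma minor_indep_iff:
  assumes C: "C \<in> I" and X: "X \<subseteq> E - C - D"
  shows "X \<in> minor_indep E I C D \<longleftrightarrow> X \<union> C \<in> I"
proof -
  have fin: "finite (X \<union> C)"
    using X C finite_ground indep_finite finite_subset by blast
  have card_XC: "card (X \<union> C) = card X + mrank I C"
    using X fin by (subst card_Un_disjoint) (auto simp: mrank_indep[OF C])
  show ?thesis
  proof
    assume "X \<in> minor_indep E I C D"
    then have "mrank I (X \<union> C) = card (X \<union> C)"
      unfolding minor_indep_def using card_XC by simp
    moreover obtain Y where "Y \<subseteq> X \<union> C" "Y \<in> I" "card Y = mrank I (X \<union> C)"
      using mrank_attained[OF fin] .
    ultimately show "X \<union> C \<in> I" using fin card_subset_eq by metis
  qed (use X card_XC mrank_indep in \<open>simp add: minor_indep_def\<close>)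
qed

lemma bases_minor_iff:
  assumes P: "P \<in> bases E I" "C \<subseteq> P" "P \<inter> D = {}" and A: "A \<subseteq> E - C - D"
  shows "A \<in> bases (minor_ground E C D) (minor_indep E I C D) \<longleftrightarrow> A \<union> C \<in> bases E I"
proof -
  have C: "C \<in> I" using P indep_subset unfolding bases_def by blast
  have indep_iff: "X \<in> minor_indep E I C D \<longleftrightarrow> X \<subseteq> E - C - D \<and> X \<union> C \<in> I" for X
    using minor_indep_iff[OF C] unfolding minor_indep_def by blast
  show ?thesis
  proof
    assume A_basis: "A \<in> bases (minor_ground E C D) (minor_indep E I C D)"
    then have AC: "A \<union> C \<in> I" using indep_iff unfolding bases_def by blast
    have "card P \<le> card (A \<union> C)"
    proof (rule ccontr)
      assume "\<not> card P \<le> card (A \<union> C)"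
      then obtain y where y: "y \<in> P - (A \<union> C)" "insert y (A \<union> C) \<in> I"
        using indep_augment[OF AC] P(1) unfolding bases_def by force
      have "insert y A \<in> minor_indep E I C D"
        using y A P indep_subset_ground unfolding indep_iff bases_def by auto
      then show False
        using A_basis y unfolding bases_def by blast
    qed
    then show "A \<union> C \<in> bases E I" using basis_if_card_ge[OF P(1) AC] by blast
  next
    assume AC: "A \<union> C \<in> bases E I"
    show "A \<in> bases (minor_ground E C D) (minor_indep E I C D)"
      unfolding bases_def minor_ground_def
    proof (intro CollectI conjI allI impI)
      show "A \<subseteq> E - C - D" "A \<in> minor_indep E I C D"
        using A AC indep_iff unfolding bases_def by auto
      fix X assume "X \<in> minor_indep E I C D \<and> A \<subseteq> X"
      then have "X \<union> C = A \<union> C" "X \<subseteq> E - C - D"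
        using AC indep_iff unfolding bases_def by blast+
      then show "X = A" using A by blast
    qed
  qed
qed

lemma bpg_vertices_contract_common:
  assumes P: "P \<in> bases E I" and Q: "Q \<in> bases E I"
  defines "C \<equiv> P \<inter> Q" and "D \<equiv> E - (P \<union> Q)"
  shows "(A1, A2, A3) \<in> bpg_vertices (minor_ground E C D) (minor_indep E I C D) \<longleftrightarrow>
    A1 \<union> A2 = sym_diff P Q \<and> A1 \<inter> A2 = {} \<and> A3 = {}
    \<and> A1 \<union> C \<in> bases E I \<and> A2 \<union> C \<in> bases E I"
proof -
  have PQ: "P \<subseteq> E" "Q \<subseteq> E" "finite P" "finite Q"
    using P Q indep_finite unfolding bases_def by auto
  have ground: "minor_ground E C D = sym_diff P Q"
    using PQ unfolding minor_ground_def C_def D_def by auto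
  have basis_iff: "A \<in> bases (sym_diff P Q) (minor_indep E I C D) \<longleftrightarrow>
      A \<subseteq> sym_diff P Q \<and> A \<union> C \<in> bases E I" for A
  proof (cases "A \<subseteq> sym_diff P Q")
    case True
    then show ?thesis
      using bases_minor_iff[OF P, of C D A] ground unfolding C_def D_def minor_ground_def by auto
  qed (auto simp: bases_def)
  have "P \<inter> Q = C" "Q \<inter> P = C" unfolding C_def by blast+
  then have card_C: "card P = card (P - Q) + card C" "card Q = card (Q - P) + card C"
    using card_Int_Diff[OF PQ(3), of Q] card_Int_Diff[OF PQ(4), of P] by simp_all
  have card_sym_diff: "card (sym_diff P Q) = card (P - Q) + card (P - Q)"
    using card_C card_bases_eq[OF P Q] PQ by (subst card_Un_disjoint) auto
  have card_basis: "card A = card (P - Q)"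
    if "A \<subseteq> sym_diff P Q" "A \<union> C \<in> bases E I" for A
  proof -
    have "card (A \<union> C) = card A + card C"
      using that PQ unfolding C_def by (subst card_Un_disjoint) (auto intro: finite_subset)
    then show ?thesis using card_bases_eq[OF that(2) P] card_C by simp
  qed
  show ?thesis
    unfolding ground
  proof
    assume "(A1, A2, A3) \<in> bpg_vertices (sym_diff P Q) (minor_indep E I C D)"
    then have A: "A1 \<subseteq> sym_diff P Q" "A1 \<union> C \<in> bases E I"
        "A2 \<subseteq> sym_diff P Q" "A2 \<union> C \<in> bases E I"
        "A1 \<inter> A2 = {}" "A3 = sym_diff P Q - (A1 \<union> A2)"
      unfolding bpg_vertices_def basis_iff by auto
    have "finite A1" "finite A2"
      using A PQ by (meson finite_Diff finite_Un finite_subset)+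
    then have "card (A1 \<union> A2) = card (sym_diff P Q)"
      using A card_basis card_sym_diff by (simp add: card_Un_disjoint)
    then have "A1 \<union> A2 = sym_diff P Q"
      using A PQ by (intro card_subset_eq) auto
    then show "A1 \<union> A2 = sym_diff P Q \<and> A1 \<inter> A2 = {} \<and> A3 = {}
        \<and> A1 \<union> C \<in> bases E I \<and> A2 \<union> C \<in> bases E I"
      using A by blast
  qed (auto simp: bpg_vertices_def basis_iff)
qed

end

lemma bpg_adj_partitions_exchange:
  assumes A: "A1 \<union> A2 = X" "A1 \<inter> A2 = {}" and B: "B1 \<union> B2 = X" "B1 \<inter> B2 = {}"
    and "finite X" "card A1 = card B1" and "bpg_adj (A1, A2, {}) (B1, B2, {})"
  obtains x y where "x \<in> A1 - A2" "y \<in> A2 - A1"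
    "B1 = insert y (A1 - {x})" "B2 = insert x (A2 - {y})"
proof -
  have fin: "finite A1" "finite B1" using A B \<open>finite X\<close> by (metis finite_Un)+
  have "A2 - B2 = B1 - A1" using A B by blast
  moreover have "card (A1 - B1) = card (B1 - A1)"
    using fin \<open>card A1 = card B1\<close> card_Diff_subset_Int[of A1 B1] card_Diff_subset_Int[of B1 A1]
    by (simp add: inf.commute)
  ultimately have "card (A1 - B1) = 1" "card (B1 - A1) = 1"
    using \<open>bpg_adj _ _\<close> unfolding bpg_adj_def by simp_all
  then obtain x y where xy: "A1 - B1 = {x}" "B1 - A1 = {y}"
    by (meson card_1_singletonE)
  have B1_eq: "B1 = insert y (A1 - {x})"
    using xy by blast
  have "A2 = X - A1" "B2 = X - B1"
    using A B by blast+
  then have B2_eq: "B2 = insert x (A2 - {y})"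
    using xy B1_eq A(1) by blast
  moreover have "x \<in> A1 - A2" "y \<in> A2 - A1"
    using xy A B by blast+
  ultimately show ?thesis using B1_eq that by blast
qed

section \<open>Lists and multisets\<close>

lemma sum_list_update:
  fixes xs :: "'a::cancel_comm_monoid_add list"
  shows "k < length xs \<Longrightarrow> sum_list (xs[k := x]) + xs ! k = sum_list xs + x"
proof (induction xs arbitrary: k)
  case (Cons a xs)
  then show ?case by (cases k) (simp_all add: add.commute add.left_commute)
qed simp

lemma sum_list_update2:
  fixes xs :: "'a::cancel_comm_monoid_add list"
  assumes "i < length xs" "j < length xs" "i \<noteq> j"
  shows "sum_list (xs[i := x, j := y]) + xs ! i + xs ! j = sum_list xs + x + y"
  using assms sum_list_update[of i xs x] sum_list_update[of j "xs[i := x]" y]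
  by (simp add: add_ac)

lemma sum_list_map_eq_sum_mset: "sum_list (map f L) = sum_mset (image_mset f (mset L))"
  by (metis mset_map sum_mset_sum_list)

lemma mset_update_add: "i < length L \<Longrightarrow> mset (L[i := a]) + {#L ! i#} = mset L + {#a#}"
  by (simp add: mset_update)

lemma mset_update2:
  assumes "i < length L" "j < length L" "i \<noteq> j" "{#L ! i, L ! j#} \<subseteq># mset L"
  shows "mset (L[i := a, j := b]) = mset L - {#L ! i, L ! j#} + {#a, b#}"
proof -
  have "mset (L[i := a, j := b]) + {#L ! i, L ! j#} = mset L + {#a, b#}"
    using assms mset_update_add[of j "L[i := a]" b] mset_update_add[of i L a]
    by (simp add: add_mset_commute)
  then show ?thesis
    using assms(4) by (metis add_diff_cancel_right' subset_mset.diff_add_assoc2)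
qed

lemma list_update_update2:
  "i \<noteq> j \<Longrightarrow> L[i := a, j := b, i := a', j := b'] = L[i := a', j := b']"
  by (metis list_update_overwrite list_update_swap)

lemma mset_set_Un_partition:
  assumes "A1 \<union> A2 = X" "A1 \<inter> A2 = {}" "finite X" "finite C" "X \<inter> C = {}"
  shows "mset_set (A1 \<union> C) + mset_set (A2 \<union> C) = mset_set X + mset_set C + mset_set C"
proof -
  have fin: "finite A1" "finite A2" using assms(1,3) by auto
  have "mset_set (A1 \<union> C) = mset_set A1 + mset_set C" "mset_set (A2 \<union> C) = mset_set A2 + mset_set C"
    using assms fin by (blast intro: mset_set_Union)+
  moreover have "mset_set X = mset_set A1 + mset_set A2"
    using assms fin mset_set_Union by blast
  ultimately show ?thesis by (simp add: add_ac)
qed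

lemma equivp_mset_eq_by_swaps:
  assumes R: "equivp R"
    and closed: "\<And>L L'. L \<in> V \<Longrightarrow> mset L' = mset L \<Longrightarrow> L' \<in> V"
    and swap: "\<And>L i j. L \<in> V \<Longrightarrow> i < j \<Longrightarrow> j < length L \<Longrightarrow> R L (L[i := L ! j, j := L ! i])"
    and "L \<in> V" "mset L' = mset L"
  shows "R L L'"
proof -
  have "R (pre @ xs) (pre @ ys)" if "pre @ xs \<in> V" "mset ys = mset xs" for pre xs ys
    using that
  proof (induction xs arbitrary: pre ys)
    case Nil
    then show ?case using equivp_reflp[OF R] by simp
  next
    case (Cons a xs)
    have "a \<in> set ys" using Cons.prems(2) by (simp flip: set_mset_mset)
    then obtain q where q: "q < length ys" "ys ! q = a" by (meson in_set_conv_nth)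
    define ys' where "ys' = ys[0 := ys ! q, q := ys ! 0]"
    have "ys \<noteq> []" using q by (cases ys) auto
    then have "ys' \<noteq> []" "ys' ! 0 = a"
      using q unfolding ys'_def by (cases q; simp)+
    then obtain zs where zs: "ys' = a # zs"
      by (cases ys') auto
    have "mset ys' = mset ys"
      unfolding ys'_def by (rule mset_swap) (use q in auto)
    then have "mset zs = mset xs" using zs Cons.prems(2) by simp
    moreover have "(pre @ [a]) @ xs \<in> V" using Cons.prems(1) by simp
    ultimately have to_ys': "R (pre @ a # xs) (pre @ ys')"
      using Cons.IH[of "pre @ [a]" zs] zs by simp
    have "R (pre @ ys) (pre @ ys')"
    proof (cases "q = 0")
      case True
      then show ?thesis unfolding ys'_def using equivp_reflp[OF R] by simp
    next
      case False
      have "pre @ ys \<in> V" using closed[OF Cons.prems(1)] Cons.prems(2) by simp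
      then have "R (pre @ ys) ((pre @ ys)[length pre := (pre @ ys) ! (length pre + q),
          length pre + q := (pre @ ys) ! length pre])"
        using swap[of "pre @ ys" "length pre" "length pre + q"] q False by simp
      moreover have "(pre @ ys)[length pre := (pre @ ys) ! (length pre + q),
          length pre + q := (pre @ ys) ! length pre] = pre @ ys'"
        unfolding ys'_def by (simp add: list_update_append nth_append)
      ultimately show ?thesis by simp
    qed
    with to_ys' show ?case by (meson R equivp_symp equivp_transp)
  qed
  from this[of "[]"] assms(4,5) show ?thesis by simp
qed

section \<open>Multisets and tuples of bases\<close>

lemma GM'_vertices_iff_mset: "L \<in> GM'_vertices E I k S \<longleftrightarrow> mset L \<in> GM_vertices E I k S"
  unfolding GM'_vertices_def GM_vertices_def by (auto simp: sum_list_map_eq_sum_mset)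

lemma GM'_vertices_update2:
  assumes L: "L \<in> GM'_vertices E I k S" and ij: "i < length L" "j < length L" "i \<noteq> j"
    and B: "B1 \<in> bases E I" "B2 \<in> bases E I"
    and sum_eq: "mset_set B1 + mset_set B2 = mset_set (L ! i) + mset_set (L ! j)"
  shows "L[i := B1, j := B2] \<in> GM'_vertices E I k S"
proof -
  have "sum_list (map mset_set (L[i := B1, j := B2])) = sum_list (map mset_set L)"
    using sum_list_update2[of i "map mset_set L" j "mset_set B1" "mset_set B2"] ij sum_eq
    by (simp add: map_update add.assoc)
  moreover have "set (L[i := B1, j := B2]) \<subseteq> insert B1 (insert B2 (set L))"
    using set_update_subset_insert[of "L[i := B1]" j B2] set_update_subset_insert[of L i B1]
    by blast
  ultimately show ?thesis using L B unfolding GM'_vertices_def by auto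
qed

lemma GM'_vertices_update_common:
  assumes L: "L \<in> GM'_vertices E I k S" and ij: "i < length L" "j < length L" "i \<noteq> j"
    and fin: "finite (L ! i)" "finite (L ! j)"
  defines "C \<equiv> L ! i \<inter> L ! j"
  assumes A: "A1 \<union> A2 = sym_diff (L ! i) (L ! j)" "A1 \<inter> A2 = {}"
    "A1 \<union> C \<in> bases E I" "A2 \<union> C \<in> bases E I"
  shows "L[i := A1 \<union> C, j := A2 \<union> C] \<in> GM'_vertices E I k S"
proof -
  have C: "sym_diff (L ! i) (L ! j) \<inter> C = {}" "finite C" "finite (sym_diff (L ! i) (L ! j))"
    using fin unfolding C_def by auto
  have "(L ! i - L ! j) \<union> C = L ! i" "(L ! j - L ! i) \<union> C = L ! j"
    unfolding C_def by blast+
  then have "mset_set (L ! i) + mset_set (L ! j)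
      = mset_set (sym_diff (L ! i) (L ! j)) + mset_set C + mset_set C"
    using mset_set_Un_partition[of "L ! i - L ! j" "L ! j - L ! i", OF _ _ C(3,2,1)] by auto
  then have "mset_set (A1 \<union> C) + mset_set (A2 \<union> C) = mset_set (L ! i) + mset_set (L ! j)"
    using mset_set_Un_partition[OF A(1,2) C(3,2,1)] by simp
  then show ?thesis
    using GM'_vertices_update2[OF L ij A(3,4)] by blast
qed

lemma GM'_exch_update2:
  assumes "i < j" "j < length L"
    and "x \<in> A1 - A2" "y \<in> A2 - A1" "x \<notin> C" "y \<notin> C"
  shows "GM'_exch (L[i := A1 \<union> C, j := A2 \<union> C])
    (L[i := insert y (A1 - {x}) \<union> C, j := insert x (A2 - {y}) \<union> C])"
proof -
  let ?L = "L[i := A1 \<union> C, j := A2 \<union> C]"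
  have nth: "?L ! i = A1 \<union> C" "?L ! j = A2 \<union> C"
    using assms(1,2) by auto
  have "insert y (A1 - {x}) \<union> C = insert y (?L ! i - {x})"
    "insert x (A2 - {y}) \<union> C = insert x (?L ! j - {y})"
    unfolding nth using assms(3-6) by auto
  then have "L[i := insert y (A1 - {x}) \<union> C, j := insert x (A2 - {y}) \<union> C]
      = ?L[i := insert y (?L ! i - {x}), j := insert x (?L ! j - {y})]"
    using list_update_update2[of i j L] assms(1) by simp
  moreover have "x \<in> ?L ! i - ?L ! j" "y \<in> ?L ! j - ?L ! i"
    unfolding nth using assms(3-6) by auto
  ultimately show ?thesis
    unfolding GM'_exch_def using assms(1,2) by (metis length_list_update)
qed

lemma GM'_exch_of_bpg_adj:
  assumes A: "A1 \<union> A2 = X" "A1 \<inter> A2 = {}" and B: "B1 \<union> B2 = X" "B1 \<inter> B2 = {}"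
    and "finite X" "X \<inter> C = {}" "card A1 = card B1" "bpg_adj (A1, A2, {}) (B1, B2, {})"
    and "i < j" "j < length L"
  shows "GM'_exch (L[i := A1 \<union> C, j := A2 \<union> C]) (L[i := B1 \<union> C, j := B2 \<union> C])"
proof -
  obtain x y where xy: "x \<in> A1 - A2" "y \<in> A2 - A1"
    and B12: "B1 = insert y (A1 - {x})" "B2 = insert x (A2 - {y})"
    using bpg_adj_partitions_exchange[OF A B] assms(5,7,8) by blast
  moreover have "x \<notin> C" "y \<notin> C"
    using xy A(1) \<open>X \<inter> C = {}\<close> by blast+
  ultimately show ?thesis
    using GM'_exch_update2[OF assms(9,10) xy] unfolding B12 by blast
qed

lemma GM'_exch_mset:
  assumes "i < j" "j < length L" "bi \<in> L ! i - L ! j" "bj \<in> L ! j - L ! i"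
  defines "L' \<equiv> L[i := insert bj (L ! i - {bi}), j := insert bi (L ! j - {bj})]"
  shows "GM'_exch L L'"
    and "{#L ! i, L ! j#} \<subseteq># mset L \<Longrightarrow>
      mset L' = mset L - {#L ! i, L ! j#} + {#insert bj (L ! i - {bi}), insert bi (L ! j - {bj})#}"
  using assms mset_update2[of i L j] unfolding GM'_exch_def by auto

lemma GM_exch_sym: "GM_exch X Y \<Longrightarrow> GM_exch Y X"
proof -
  assume "GM_exch X Y"
  then obtain Bi Bj bi bj where e: "{#Bi, Bj#} \<subseteq># X" "bi \<in> Bi - Bj" "bj \<in> Bj - Bi"
    and Y: "Y = X - {#Bi, Bj#} + {#insert bj (Bi - {bi}), insert bi (Bj - {bj})#}"
    unfolding GM_exch_def by blast
  define Ni where "Ni = insert bj (Bi - {bi})"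
  define Nj where "Nj = insert bi (Bj - {bj})"
  have "Bi = insert bi (Ni - {bj})" "Bj = insert bj (Nj - {bi})"
    using e unfolding Ni_def Nj_def by auto
  moreover have "X = Y - {#Ni, Nj#} + {#Bi, Bj#}"
    using subset_mset.diff_add[OF e(1)] unfolding Y Ni_def Nj_def by (metis add_diff_cancel_right')
  moreover have "{#Ni, Nj#} \<subseteq># Y" "bj \<in> Ni - Nj" "bi \<in> Nj - Ni"
    using e unfolding Y Ni_def Nj_def by auto
  ultimately show "GM_exch Y X"
    unfolding GM_exch_def by metis
qed

lemma GM_exch_lift:
  assumes "GM_exch (mset L) Y"
  obtains L' where "mset L' = Y" "GM'_exch L L'"
proof -
  obtain Bi Bj bi bj where e: "{#Bi, Bj#} \<subseteq># mset L" "bi \<in> Bi - Bj" "bj \<in> Bj - Bi"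
    and Y: "Y = mset L - {#Bi, Bj#} + {#insert bj (Bi - {bi}), insert bi (Bj - {bj})#}"
    using assms unfolding GM_exch_def by blast
  have "Bi \<in> set L" "Bj \<in> set L"
    using e(1) by (auto dest: mset_subset_eqD)
  then obtain i j where ij: "i < length L" "j < length L" "L ! i = Bi" "L ! j = Bj"
    by (meson in_set_conv_nth)
  have "i \<noteq> j" using ij e by blast
  then consider "i < j" | "j < i" by linarith
  then show ?thesis
  proof cases
    case 1
    then show ?thesis
      using GM'_exch_mset[of i j L bi bj] ij e that unfolding Y by auto
  next
    case 2
    have "{#Bj, Bi#} \<subseteq># mset L" using e(1) by (simp add: add_mset_commute)
    then show ?thesis
      using GM'_exch_mset[of j i L bj bi] 2 ij e that unfolding Y by (auto simp: add_mset_commute)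
  qed
qed

lemma reachable_GM_lift:
  assumes "reachable (GM_vertices E I k S) GM_adj (mset L) Y"
  shows "\<exists>L'. mset L' = Y \<and> reachable (GM'_vertices E I k S) GM'_adj L L'"
  using assms
proof (induction rule: rtranclp_induct)
  case base
  then show ?case by blast
next
  case (step Y Z)
  then obtain L' where L': "mset L' = Y" "reachable (GM'_vertices E I k S) GM'_adj L L'"
    by blast
  have "GM_exch (mset L') Z"
    using step(2) GM_exch_sym unfolding GM_adj_def L'(1) by blast
  then obtain L'' where L'': "mset L'' = Z" "GM'_exch L' L''"
    by (rule GM_exch_lift)
  have "L' \<in> GM'_vertices E I k S" "L'' \<in> GM'_vertices E I k S"
    using step(2) L'(1) L''(1) GM'_vertices_iff_mset by blast+
  then have "reachable (GM'_vertices E I k S) GM'_adj L L''"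
    using L'(2) L''(2) unfolding GM'_adj_def by (simp add: rtranclp.rtrancl_into_rtrancl)
  then show ?case using L''(1) by blast
qed

lemma bpg_path_swap_contract_common:
  assumes M: "matroid E I"
    and minors: "\<forall>C D. C \<subseteq> E \<and> D \<subseteq> E \<and> C \<inter> D = {} \<longrightarrow>
      basis_pair_graph_connected (minor_ground E C D) (minor_indep E I C D)"
    and P: "P \<in> bases E I" and Q: "Q \<in> bases E I"
  defines "C \<equiv> P \<inter> Q" and "D \<equiv> E - (P \<union> Q)"
  shows "reachable (bpg_vertices (minor_ground E C D) (minor_indep E I C D)) bpg_adj
    (P - Q, Q - P, {}) (Q - P, P - Q, {})"
proof -
  have "C \<subseteq> E" "D \<subseteq> E" "C \<inter> D = {}"
    using P Q unfolding C_def D_def bases_def by blast+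
  then have "graph_connected (bpg_vertices (minor_ground E C D) (minor_indep E I C D)) bpg_adj"
    using minors unfolding basis_pair_graph_connected_def by blast
  moreover have "(P - Q) \<union> C = P" "(Q - P) \<union> C = Q"
    unfolding C_def by blast+
  then have "(P - Q, Q - P, {}) \<in> bpg_vertices (minor_ground E C D) (minor_indep E I C D)"
    "(Q - P, P - Q, {}) \<in> bpg_vertices (minor_ground E C D) (minor_indep E I C D)"
    unfolding bpg_vertices_contract_common[OF M P Q, folded C_def D_def] using P Q by auto
  ultimately show ?thesis
    unfolding graph_connected_def by blast
qed

lemma reachable_GM'_swap:
  assumes M: "matroid E I"
    and minors: "\<forall>C D. C \<subseteq> E \<and> D \<subseteq> E \<and> C \<inter> D = {} \<longrightarrow>
      basis_pair_graph_connected (minor_ground E C D) (minor_indep E I C D)"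
    and L: "L \<in> GM'_vertices E I k S" and ij: "i < j" "j < length L"
  shows "reachable (GM'_vertices E I k S) GM'_adj L (L[i := L ! j, j := L ! i])"
proof -
  define P Q where "P = L ! i" and "Q = L ! j"
  define C D where "C = P \<inter> Q" and "D = E - (P \<union> Q)"
  let ?N = "bpg_vertices (minor_ground E C D) (minor_indep E I C D)"
  have "set L \<subseteq> bases E I"
    using L unfolding GM'_vertices_def by blast
  then have P: "P \<in> bases E I" and Q: "Q \<in> bases E I"
    using ij nth_mem[of i L] nth_mem[of j L] unfolding P_def Q_def by auto
  have vertex_iff: "(A1, A2, A3) \<in> ?N \<longleftrightarrow> A1 \<union> A2 = sym_diff P Q \<and> A1 \<inter> A2 = {} \<and> A3 = {}
      \<and> A1 \<union> C \<in> bases E I \<and> A2 \<union> C \<in> bases E I" for A1 A2 A3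
    using bpg_vertices_contract_common[OF M P Q] unfolding C_def D_def .
  have path: "reachable ?N bpg_adj (P - Q, Q - P, {}) (Q - P, P - Q, {})"
    using bpg_path_swap_contract_common[OF M minors P Q] unfolding C_def D_def .
  have PC: "(P - Q) \<union> C = P" and QC: "(Q - P) \<union> C = Q"
    unfolding C_def by blast+
  then have s: "(P - Q, Q - P, {}) \<in> ?N"
    unfolding vertex_iff using P Q by auto
  have "finite P" "finite Q"
    using P Q indep_finite[OF M] unfolding bases_def by blast+
  then have C_disj: "sym_diff P Q \<inter> C = {}" "finite C" "finite (sym_diff P Q)"
    unfolding C_def by auto
  define f where "f = (\<lambda>(A1, A2, A3::'a set). L[i := A1 \<union> C, j := A2 \<union> C])"
  have f_eval: "f (A1, A2, A3) = L[i := A1 \<union> C, j := A2 \<union> C]" for A1 A2 A3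
    by (simp add: f_def)
  have f_vertex: "f v \<in> GM'_vertices E I k S" if "v \<in> ?N" for v
  proof -
    obtain A1 A2 A3 where v: "v = (A1, A2, A3)" by (cases v)
    have "A1 \<union> A2 = sym_diff P Q" "A1 \<inter> A2 = {}" "A1 \<union> C \<in> bases E I" "A2 \<union> C \<in> bases E I"
      using that vertex_iff unfolding v by auto
    then show ?thesis
      using GM'_vertices_update_common[of L E I k S i j A1 A2] L ij \<open>finite P\<close> \<open>finite Q\<close>
      unfolding v f_eval P_def Q_def C_def by simp
  qed
  have f_adj: "GM'_adj (f v) (f w)" if "v \<in> ?N" "w \<in> ?N" "bpg_adj v w" for v w
  proof -
    obtain A1 A2 A3 B1 B2 B3 where v: "v = (A1, A2, A3)" and w: "w = (B1, B2, B3)"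
      by (cases v, cases w)
    have A: "A1 \<union> A2 = sym_diff P Q" "A1 \<inter> A2 = {}" "A3 = {}" "A1 \<union> C \<in> bases E I"
      and B: "B1 \<union> B2 = sym_diff P Q" "B1 \<inter> B2 = {}" "B3 = {}" "B1 \<union> C \<in> bases E I"
      using that vertex_iff unfolding v w by auto
    have "finite A1" "finite B1" "A1 \<inter> C = {}" "B1 \<inter> C = {}"
      using A(1) B(1) C_disj by (metis finite_Un, metis finite_Un, blast, blast)
    then have "card A1 = card B1"
      using card_bases_eq[OF M A(4) B(4)] C_disj(2) by (simp add: card_Un_disjoint)
    moreover have "bpg_adj (A1, A2, {}) (B1, B2, {})"
      using that(3) unfolding v w A(3) B(3) .
    ultimately show ?thesis
      using GM'_exch_of_bpg_adj[OF A(1,2) B(1,2) C_disj(3,1) _ _ ij]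
      unfolding GM'_adj_def v w f_eval by blast
  qed
  have "reachable (GM'_vertices E I k S) GM'_adj (f (P - Q, Q - P, {})) (f (Q - P, P - Q, {}))"
    using reachable_hom[OF path s, of f] f_vertex f_adj by blast
  moreover have "f (P - Q, Q - P, {}) = L" "f (Q - P, P - Q, {}) = L[i := L ! j, j := L ! i]"
    unfolding f_eval PC QC unfolding P_def Q_def by simp_all
  ultimately show ?thesis by simp
qed

theorem theorem2p5:
  fixes E :: "'a set" and \<I> :: "'a set set" and k :: nat and S :: "'a multiset"
  assumes "matroid E \<I>"
    and "\<forall>C D. C \<subseteq> E \<and> D \<subseteq> E \<and> C \<inter> D = {} \<longrightarrow>
           basis_pair_graph_connected (minor_ground E C D) (minor_indep E \<I> C D)"
    and "k \<ge> 2"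
    and "size S = k * mrank \<I> E"
    and "set_mset S \<subseteq> E"
    and "graph_connected (GM_vertices E \<I> k S) GM_adj"
  shows "graph_connected (GM'_vertices E \<I> k S) GM'_adj"
  unfolding graph_connected_def
proof (intro ballI)
  let ?V = "GM_vertices E \<I> k S" and ?V' = "GM'_vertices E \<I> k S"
  fix L1 L2 assume L1: "L1 \<in> ?V'" and L2: "L2 \<in> ?V'"
  then have "reachable ?V GM_adj (mset L1) (mset L2)"
    using assms(6) unfolding graph_connected_def GM'_vertices_iff_mset by blast
  then obtain L where L: "mset L = mset L2" "reachable ?V' GM'_adj L1 L"
    using reachable_GM_lift by blast
  have "equivp (reachable ?V' GM'_adj)"
    by (rule equivp_reachable) (auto simp: symp_def GM'_adj_def)
  then have "reachable ?V' GM'_adj L L2"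
  proof (rule equivp_mset_eq_by_swaps)
    show "L \<in> ?V'" using L2 L(1) by (simp add: GM'_vertices_iff_mset)
  qed (use L(1) reachable_GM'_swap[OF assms(1,2)] in \<open>simp_all add: GM'_vertices_iff_mset\<close>)
  with L(2) show "reachable ?V' GM'_adj L1 L2" by (rule rtranclp_trans)
qed

end
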